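(* The frequency ranking is stable for $r\ge 761$: for all integers $r,r'\ge 761$ and all hand types $h,h'\in\{\mathrm{HC},\mathrm{1P},\mathrm{2P},\mathrm{3X},\mathrm{ST},\mathrm{FL},\mathrm{FH},\mathrm{4X},\mathrm{SF}\}$, one has $freq_r(h)<freq_r(h')$ if and only if $freq_{r'}(h)<freq_{r'}(h')$.
   Context: Fix an integer $r\ge 5$. The deck has $4r$ cards: each card has one of $4$ suits and one of $r$ ranks $1,\dots,r$, each (suit, rank) pair occurring exactly once; rank $r$ plays the role of the ace. Let $S_r$ be the set of $7$-card subsets of the deck. Hand types of a $5$-card set: HC (high card): every $5$-card set; 1P: two cards of equal rank; 2P: two cards of rank $a$ and two cards of a rank $b\ne a$, or four cards of one rank (four of a kind is considered to contain two pair); 3X: three cards of equal rank; ST (straight): the five ranks form one of the sets $\{k,k+1,k+2,k+3,k+4\}$ with $1\le k\le r-4$, or $\{r,1,2,3,4\}$ (ace low); FL (flush): all five cards of the same suit; FH (full house): three cards of rank $a$ and two cards of a rank $b\ne a$; 4X: four cards of equal rank; SF (straight flush): both a straight and a flush. Types are counted inclusively. For $s\in S_r$ write $h\in s$ if some $5$-card subset of $s$ is of type $h$, and set $freq_r(h)=|\{s\in S_r: h\in s\}|$. The frequency ranking for $r$ places $h_0$ above $h_1$ exactly when $freq_r(h_0)<freq_r(h_1)$. *)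

theory Defs
  imports Main
begin

text \<open>A card is a pair (suit, rank) with suit in {0..3} (four suits) and rank in {1..r};
  rank r plays the role of the ace.\<close>
type_synonym card = "nat \<times> nat"

definition suit :: "card \<Rightarrow> nat" where "suit c = fst c"
definition rank :: "card \<Rightarrow> nat" where "rank c = snd c"

definition deck :: "nat \<Rightarrow> card set" where
  "deck r = {0..<4} \<times> {1..r}"

definition seven_sets :: "nat \<Rightarrow> card set set" where
  "seven_sets r = {s. s \<subseteq> deck r \<and> card s = 7}"

datatype hand_type = HC | OneP | TwoP | ThreeX | ST | FL | FH | FourX | SF

definition has_n_of_rank :: "nat \<Rightarrow> nat \<Rightarrow> card set \<Rightarrow> bool" where
  "has_n_of_rank n a h = (card {c \<in> h. rank c = a} \<ge> n)"

definition is_straight :: "nat \<Rightarrow> card set \<Rightarrow> bool" where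
  "is_straight r h =
     ((\<exists>k. 1 \<le> k \<and> k + 4 \<le> r \<and> rank ` h = {k..k+4}) \<or> rank ` h = {r,1,2,3,4})"

definition is_flush :: "card set \<Rightarrow> bool" where
  "is_flush h = (\<forall>c\<in>h. \<forall>d\<in>h. suit c = suit d)"

text \<open>Whether a 5-card set h is of hand type t (types counted inclusively).\<close>
fun of_type :: "nat \<Rightarrow> hand_type \<Rightarrow> card set \<Rightarrow> bool" where
  "of_type r HC h = True"
| "of_type r OneP h = (\<exists>a. has_n_of_rank 2 a h)"
| "of_type r TwoP h = ((\<exists>a b. a \<noteq> b \<and> has_n_of_rank 2 a h \<and> has_n_of_rank 2 b h)
                      \<or> (\<exists>a. has_n_of_rank 4 a h))"
| "of_type r ThreeX h = (\<exists>a. has_n_of_rank 3 a h)"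
| "of_type r ST h = is_straight r h"
| "of_type r FL h = is_flush h"
| "of_type r FH h = (\<exists>a b. a \<noteq> b \<and> has_n_of_rank 3 a h \<and> has_n_of_rank 2 b h)"
| "of_type r FourX h = (\<exists>a. has_n_of_rank 4 a h)"
| "of_type r SF h = (is_straight r h \<and> is_flush h)"

definition contains_type :: "nat \<Rightarrow> hand_type \<Rightarrow> card set \<Rightarrow> bool" where
  "contains_type r t s = (\<exists>h. h \<subseteq> s \<and> card h = 5 \<and> of_type r t h)"

definition freq :: "nat \<Rightarrow> hand_type \<Rightarrow> nat" where
  "freq r t = card {s \<in> seven_sets r. contains_type r t s}"

end

(*
  For every r >= 761 the frequencies are strictly ordered
    SF < ST < 4X < FH < 3X < 2P < 1P < FL < HC,
  so the ranking is the same for all such r.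

  Four of the eight steps are strict inclusions of events (SF in ST, FH in 3X, 2P in 1P,
  FL in HC), each made strict by one explicit seven-card hand.  The other four compare
  polynomials in r.  Hands with n cards of one rank are counted from above by choosing the
  rank, the n cards and the other 7 - n cards freely.  Four of a kind, full houses, two pairs
  and flushes are counted from below by injective constructions.  A straight covers the
  ace-low window or a window of five consecutive ranks whose lower neighbour is absent;
  by inclusion-exclusion a fixed window of five among m ranks is covered by
  512 (16 m^2 - 104 m + 175) seven-sets, so there are O(r^3) straights against the order r^4
  of four of a kind.  This comparison is the one that needs r >= 761.
*)

theory Submission
  imports Defs Complex_Main "HOL-Library.FuncSet"
begin

declare rank_def [simp] suit_def [simp]

lemma finite_deck [simp]: "finite (deck r)"
  by (simp add: deck_def)

lemma card_deck: "card (deck r) = 4 * r"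
  by (simp add: deck_def card_cartesian_product)

lemma seven_setsD:
  assumes "s \<in> seven_sets r"
  shows "s \<subseteq> deck r" "finite s" "card s = 7"
  using assms finite_subset[OF _ finite_deck] by (auto simp: seven_sets_def)

lemma finite_seven_sets [simp]: "finite (seven_sets r)"
  by (rule finite_subset[of _ "Pow (deck r)"]) (auto simp: seven_sets_def)

lemma Un_in_seven_setsI:
  assumes "A \<subseteq> deck r" "B \<subseteq> deck r" "A \<inter> B = {}" "card A + card B = 7"
  shows "A \<union> B \<in> seven_sets r"
proof -
  have "finite A" "finite B"
    using assms(1,2) by (auto intro: finite_subset[OF _ finite_deck])
  then show ?thesis
    using assms by (simp add: seven_sets_def card_Un_disjoint)
qed

lemma contains_typeI: "h \<subseteq> s \<Longrightarrow> card h = 5 \<Longrightarrow> of_type r t h \<Longrightarrow> contains_type r t s"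
  by (auto simp: contains_type_def)

lemma contains_type_mono:
  "contains_type r t s \<Longrightarrow> (\<And>h. of_type r t h \<Longrightarrow> of_type r t' h) \<Longrightarrow> contains_type r t' s"
  by (auto simp: contains_type_def)

lemma card_le_freq:
  assumes "inj_on f D" and "f ` D \<subseteq> {s \<in> seven_sets r. contains_type r t s}"
  shows "card D \<le> freq r t"
  unfolding freq_def using assms by (intro card_inj_on_le[of f]) auto

lemma freq_less_of_subset:
  assumes "\<And>s. s \<in> seven_sets r \<Longrightarrow> contains_type r t s \<Longrightarrow> contains_type r t' s"
    and "w \<in> seven_sets r" "contains_type r t' w" "\<not> contains_type r t w"
  shows "freq r t < freq r t'"
  unfolding freq_def using assms by (intro psubset_card_mono) auto

lemma card_Sigma_ge:
  assumes "finite A" "m \<le> card A"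
    and "\<And>a. a \<in> A \<Longrightarrow> finite (B a)" "\<And>a. a \<in> A \<Longrightarrow> k \<le> card (B a)"
  shows "m * k \<le> card (Sigma A B)"
proof -
  have "m * k \<le> (\<Sum>a\<in>A. k)"
    using assms(2) by simp
  also have "\<dots> \<le> (\<Sum>a\<in>A. card (B a))"
    using assms(4) by (rule sum_mono)
  also have "\<dots> = card (Sigma A B)"
    using assms(1,3) by simp
  finally show ?thesis .
qed

lemma inj_on_disjoint_Un:
  assumes disjoint: "\<And>x E. x \<in> X \<Longrightarrow> E \<in> Es x \<Longrightarrow> B x \<inter> E = {}"
    and determined: "\<And>x y E F. x \<in> X \<Longrightarrow> y \<in> X \<Longrightarrow> E \<in> Es x \<Longrightarrow> F \<in> Es y \<Longrightarrow>
                       B x \<union> E = B y \<union> F \<Longrightarrow> x = y"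
  shows "inj_on (\<lambda>(x, E). B x \<union> E) (Sigma X Es)"
proof (rule inj_onI, clarify)
  fix x E y F
  assume "x \<in> X" "E \<in> Es x" "y \<in> X" "F \<in> Es y" and eq: "B x \<union> E = B y \<union> F"
  then have "x = y"
    using determined by blast
  moreover have "E = F"
    using eq disjoint \<open>x = y\<close> \<open>E \<in> Es x\<close> \<open>F \<in> Es y\<close> \<open>y \<in> X\<close> by blast
  ultimately show "x = y \<and> E = F" ..
qed

lemma four_choose [simp]:
  "(4::nat) choose 2 = 6" "(4::nat) choose 3 = 4" "(4::nat) choose 4 = 1"
  by (simp_all add: numeral_eq_Suc)

lemma real_binomial_expand:
  "real (n choose 2) = real n * (real n - 1) / 2"
  "real (n choose 3) = real n * (real n - 1) * (real n - 2) / 6"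
  "real (n choose 4) = real n * (real n - 1) * (real n - 2) * (real n - 3) / 24"
  "real (n choose 5) = real n * (real n - 1) * (real n - 2) * (real n - 3) * (real n - 4) / 120"
  "real (n choose 7) = real n * (real n - 1) * (real n - 2) * (real n - 3) * (real n - 4)
     * (real n - 5) * (real n - 6) / 5040"
  by (simp_all add: binomial_gbinomial gbinomial_prod_rev numeral_eq_Suc prod.atLeast0_lessThan_Suc
      algebra_simps)

definition rank_cards :: "nat \<Rightarrow> card set" where
  "rank_cards a = {0..<4} \<times> {a}"

definition cards_of_rank :: "card set \<Rightarrow> nat \<Rightarrow> card set" where
  "cards_of_rank s a = {c \<in> s. rank c = a}"

lemma mem_rank_cards [simp]: "c \<in> rank_cards a \<longleftrightarrow> suit c < 4 \<and> rank c = a"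
  by (cases c) (auto simp: rank_cards_def)

lemma finite_rank_cards [simp]: "finite (rank_cards a)"
  by (simp add: rank_cards_def)

lemma card_rank_cards [simp]: "card (rank_cards a) = 4"
  by (simp add: rank_cards_def card_cartesian_product)

lemma finite_subset_rank_cards: "T \<subseteq> rank_cards a \<Longrightarrow> finite T"
  using finite_subset finite_rank_cards by blast

lemma rank_cards_subset_deck: "a \<in> {1..r} \<Longrightarrow> rank_cards a \<subseteq> deck r"
  by (auto simp: deck_def)

lemma rank_cards_disjoint: "a \<noteq> b \<Longrightarrow> rank_cards a \<inter> rank_cards b = {}"
  by auto

lemma rank_cards_disjoint_ranks: "a \<notin> Y \<Longrightarrow> rank_cards a \<inter> ({0..<4} \<times> Y) = {}"
  by auto

lemma cards_of_rank_in_deck: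
  assumes "s \<subseteq> deck r" "c \<in> cards_of_rank s a"
  shows "cards_of_rank s a \<subseteq> rank_cards a" "a \<in> {1..r}"
  using assms by (auto simp: cards_of_rank_def deck_def)

lemma cards_of_rank_Un:
  "cards_of_rank (A \<union> B) a = cards_of_rank A a \<union> cards_of_rank B a"
  by (auto simp: cards_of_rank_def)

lemma cards_of_rank_block:
  "T \<subseteq> rank_cards a \<Longrightarrow> cards_of_rank T z = (if z = a then T else {})"
  by (auto simp: cards_of_rank_def)

lemma cards_of_rank_outside:
  "E \<subseteq> {0..<4} \<times> Y \<Longrightarrow> z \<notin> Y \<Longrightarrow> cards_of_rank E z = {}"
  by (auto simp: cards_of_rank_def)

lemma has_n_of_rank_mono:
  "has_n_of_rank n a h \<Longrightarrow> h \<subseteq> s \<Longrightarrow> finite s \<Longrightarrow> n \<le> card (cards_of_rank s a)"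
  unfolding has_n_of_rank_def cards_of_rank_def
  by (erule order_trans, rule card_mono) auto

lemma has_n_of_rank_antimono: "has_n_of_rank n a h \<Longrightarrow> m \<le> n \<Longrightarrow> has_n_of_rank m a h"
  by (simp add: has_n_of_rank_def)

lemma has_n_of_rankI:
  "T \<subseteq> h \<Longrightarrow> T \<subseteq> rank_cards a \<Longrightarrow> finite h \<Longrightarrow> has_n_of_rank (card T) a h"
  unfolding has_n_of_rank_def by (rule card_mono) auto

section \<open>Lower bounds by injective constructions\<close>

text \<open>The fillers of the full-house and two-pair constructions have pairwise distinct ranks, so
  they add no pair: the ranks carrying two or more cards of such a hand, and with them the
  chosen blocks, can be read back from the hand.\<close>

definition rainbow_sets :: "nat set \<Rightarrow> nat \<Rightarrow> card set set" where
  "rainbow_sets Y k = {E. E \<subseteq> {0..<4} \<times> Y \<and> card E = k \<and> inj_on rank E}"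

lemma finite_rainbow_sets [simp]: "finite Y \<Longrightarrow> finite (rainbow_sets Y k)"
  by (rule finite_subset[of _ "Pow ({0..<4} \<times> Y)"]) (auto simp: rainbow_sets_def)

lemma card_cards_of_rank_rainbow:
  assumes "E \<in> rainbow_sets Y k"
  shows "card (cards_of_rank E z) \<le> 1"
proof -
  have "inj_on rank (cards_of_rank E z)"
    using assms by (auto simp: rainbow_sets_def cards_of_rank_def intro: inj_on_subset)
  then have "card (cards_of_rank E z) \<le> card {z}"
    by (rule card_inj_on_le) (auto simp: cards_of_rank_def)
  then show ?thesis
    by simp
qed

lemma card_rainbow_sets_ge:
  assumes "finite Y"
  shows "(card Y choose k) * 4 ^ k \<le> card (rainbow_sets Y k)"
proof -
  let ?D = "Sigma {R. R \<subseteq> Y \<and> card R = k} (\<lambda>R. R \<rightarrow>\<^sub>E {0..<4::nat})"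
  let ?graph = "\<lambda>(R, f). (\<lambda>y. (f y, y)) ` R"
  have "inj_on ?graph ?D"
  proof (rule inj_onI, clarify)
    fix R R' :: "nat set" and f f' :: "nat \<Rightarrow> nat"
    assume f: "f \<in> R \<rightarrow>\<^sub>E {0..<4}" and f': "f' \<in> R' \<rightarrow>\<^sub>E {0..<4}"
      and eq: "(\<lambda>y. (f y, y)) ` R = (\<lambda>y. (f' y, y)) ` R'"
    have "R = R'"
      using arg_cong[OF eq, of "image snd"] by (simp add: image_image)
    moreover have "f = f'"
      using f f' eq \<open>R = R'\<close> by (intro PiE_ext) auto
    ultimately show "R = R' \<and> f = f'" ..
  qed
  moreover have "?graph ` ?D \<subseteq> rainbow_sets Y k"
    by (auto simp: rainbow_sets_def card_image inj_on_def)
  ultimately have "card ?D \<le> card (rainbow_sets Y k)"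
    using assms by (intro card_inj_on_le) auto
  moreover have "(card Y choose k) * 4 ^ k \<le> card ?D"
    using assms by (intro card_Sigma_ge) (auto simp: n_subsets card_PiE finite_subset intro: finite_PiE)
  ultimately show ?thesis
    by linarith
qed

lemma card_rainbow_sets_Diff_ge:
  assumes "R \<subseteq> {1..r}" "card R = 2"
  shows "(r - 2 choose k) * 4 ^ k \<le> card (rainbow_sets ({1..r} - R) k)"
  using card_rainbow_sets_ge[of "{1..r} - R" k] assms by (simp add: card_Diff_subset finite_subset)

lemma four_of_a_kind_hand:
  assumes "a \<in> {1..r}" "U \<subseteq> deck r - rank_cards a" "card U = 3"
  shows "rank_cards a \<union> U \<in> seven_sets r" "contains_type r FourX (rank_cards a \<union> U)"
proof -
  show "rank_cards a \<union> U \<in> seven_sets r"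
    using assms rank_cards_subset_deck by (intro Un_in_seven_setsI) auto
  obtain u where u: "u \<in> U"
    using assms(3) by (metis card.empty ex_in_conv zero_neq_numeral)
  then have "u \<notin> rank_cards a"
    using assms(2) by blast
  then have "card (insert u (rank_cards a)) = 5" "has_n_of_rank 4 a (insert u (rank_cards a))"
    using has_n_of_rankI[of "rank_cards a" "insert u (rank_cards a)" a] by auto
  then show "contains_type r FourX (rank_cards a \<union> U)"
    using u by (intro contains_typeI[of "insert u (rank_cards a)"]) auto
qed

lemma freq_FourX_ge: "r * (4 * r - 4 choose 3) \<le> freq r FourX"
proof -
  let ?Es = "\<lambda>a. {U. U \<subseteq> deck r - rank_cards a \<and> card U = 3}"
  have "r * (4 * r - 4 choose 3) \<le> card (Sigma {1..r} ?Es)"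
    by (intro card_Sigma_ge) (auto simp: n_subsets card_Diff_subset rank_cards_subset_deck card_deck)
  also have "\<dots> \<le> freq r FourX"
  proof (rule card_le_freq)
    show "inj_on (\<lambda>(a, U). rank_cards a \<union> U) (Sigma {1..r} ?Es)"
    proof (rule inj_on_disjoint_Un)
      fix a b U V
      assume V: "V \<in> ?Es b" and eq: "rank_cards a \<union> U = rank_cards b \<union> V"
      show "a = b"
      proof (rule ccontr)
        assume "a \<noteq> b"
        then have "rank_cards a \<subseteq> V"
          using eq rank_cards_disjoint by blast
        then have "4 \<le> card V"
          using V by (metis card_mono card_rank_cards finite_Diff finite_deck finite_subset mem_Collect_eq)
        then show False
          using V by simp
      qed
    qed auto
    show "(\<lambda>(a, U). rank_cards a \<union> U) ` Sigma {1..r} ?Es \<subseteq> {s \<in> seven_sets r. contains_type r FourX s}"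
      using four_of_a_kind_hand by auto
  qed
  finally show ?thesis .
qed

lemma two_blocks_rainbow:
  assumes T: "T \<subseteq> rank_cards a" and P: "P \<subseteq> rank_cards b" and "a \<noteq> b"
    and E: "E \<in> rainbow_sets Y k" and "a \<notin> Y" "b \<notin> Y"
  shows "T \<inter> P = {}" "(T \<union> P) \<inter> E = {}"
    and "cards_of_rank (T \<union> P \<union> E) a = T" "cards_of_rank (T \<union> P \<union> E) b = P"
    and "z \<noteq> a \<Longrightarrow> z \<noteq> b \<Longrightarrow> card (cards_of_rank (T \<union> P \<union> E) z) \<le> 1"
proof -
  have E_ranks: "E \<subseteq> {0..<4} \<times> Y"
    using E by (simp add: rainbow_sets_def)
  show "T \<inter> P = {}"
    using rank_cards_disjoint[OF \<open>a \<noteq> b\<close>] T P by blast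
  show "(T \<union> P) \<inter> E = {}"
    using rank_cards_disjoint_ranks[of a Y] rank_cards_disjoint_ranks[of b Y] assms E_ranks by blast
  show "cards_of_rank (T \<union> P \<union> E) a = T" "cards_of_rank (T \<union> P \<union> E) b = P"
    using assms cards_of_rank_outside[OF E_ranks] by (simp_all add: cards_of_rank_Un cards_of_rank_block)
  show "card (cards_of_rank (T \<union> P \<union> E) z) \<le> 1" if "z \<noteq> a" "z \<noteq> b"
    using that T P card_cards_of_rank_rainbow[OF E] by (simp add: cards_of_rank_Un cards_of_rank_block)
qed

lemma two_blocks_rainbow_in_seven_sets:
  assumes "T \<subseteq> rank_cards a" "P \<subseteq> rank_cards b" "a \<noteq> b" "a \<in> {1..r}" "b \<in> {1..r}"
    and rainbow: "E \<in> rainbow_sets Y k" and "Y \<subseteq> {1..r}" "a \<notin> Y" "b \<notin> Y"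
    and "card T + card P + k = 7"
  shows "T \<union> P \<union> E \<in> seven_sets r"
proof (rule Un_in_seven_setsI)
  show "T \<union> P \<subseteq> deck r"
    using assms rank_cards_subset_deck by blast
  show "E \<subseteq> deck r"
    using rainbow \<open>Y \<subseteq> {1..r}\<close> by (auto simp: rainbow_sets_def deck_def)
  show "(T \<union> P) \<inter> E = {}"
    using two_blocks_rainbow(2)[OF assms(1-3) rainbow] assms by simp
  have "finite T" "finite P"
    using assms(1,2) by (simp_all add: finite_subset_rank_cards)
  then show "card (T \<union> P) + card E = 7"
    using assms two_blocks_rainbow(1)[OF assms(1-3) rainbow] by (simp add: card_Un_disjoint rainbow_sets_def)
qed

definition full_house_blocks :: "nat \<Rightarrow> (nat \<times> nat \<times> card set \<times> card set) set" where
  "full_house_blocks r = (SIGMA a:{1..r}. SIGMA b:{1..r} - {a}.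
     {T. T \<subseteq> rank_cards a \<and> card T = 3} \<times> {P. P \<subseteq> rank_cards b \<and> card P = 2})"

lemma full_house_blocksD:
  assumes "(a, b, T, P) \<in> full_house_blocks r"
  shows "T \<subseteq> rank_cards a" "P \<subseteq> rank_cards b" "a \<noteq> b" "card T = 3" "card P = 2"
    "a \<in> {1..r}" "b \<in> {1..r}"
  using assms by (auto simp: full_house_blocks_def)

lemma full_house_hand:
  assumes blocks: "(a, b, T, P) \<in> full_house_blocks r"
    and rainbow: "E \<in> rainbow_sets ({1..r} - {a, b}) 2"
  shows "(T \<union> P) \<inter> E = {}" "T \<union> P \<union> E \<in> seven_sets r" "contains_type r FH (T \<union> P \<union> E)"
proof -
  note T_P = full_house_blocksD[OF blocks]
  note two = two_blocks_rainbow[OF T_P(1-3) rainbow]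
  show "(T \<union> P) \<inter> E = {}"
    using two(2) by simp
  show "T \<union> P \<union> E \<in> seven_sets r"
    using T_P rainbow by (intro two_blocks_rainbow_in_seven_sets[of T a P b]) auto
  have "finite T" "finite P"
    using T_P(1,2) by (simp_all add: finite_subset_rank_cards)
  then have "card (T \<union> P) = 5"
    using T_P two(1) by (simp add: card_Un_disjoint)
  moreover have "has_n_of_rank 3 a (T \<union> P)" "has_n_of_rank 2 b (T \<union> P)"
    using has_n_of_rankI[of T "T \<union> P" a] has_n_of_rankI[of P "T \<union> P" b] T_P
      \<open>finite T\<close> \<open>finite P\<close> by auto
  then have "of_type r FH (T \<union> P)"
    using T_P(3) by auto
  ultimately show "contains_type r FH (T \<union> P \<union> E)"
    by (intro contains_typeI[of "T \<union> P"]) auto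
qed

lemma full_house_hand_determined:
  assumes x: "(a, b, T, P) \<in> full_house_blocks r" "E \<in> rainbow_sets ({1..r} - {a, b}) 2"
    and y: "(a', b', T', P') \<in> full_house_blocks r" "E' \<in> rainbow_sets ({1..r} - {a', b'}) 2"
    and eq: "T \<union> P \<union> E = T' \<union> P' \<union> E'"
  shows "(a, b, T, P) = (a', b', T', P')"
proof -
  have profile: "cards_of_rank (T \<union> P \<union> E) a = T" "cards_of_rank (T \<union> P \<union> E) b = P"
      "card (cards_of_rank (T \<union> P \<union> E) z) = 3 \<longleftrightarrow> z = a"
      "card (cards_of_rank (T \<union> P \<union> E) z) = 2 \<longleftrightarrow> z = b"
    if "(a, b, T, P) \<in> full_house_blocks r" "E \<in> rainbow_sets ({1..r} - {a, b}) 2" for a b T P E z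
  proof -
    note T_P = full_house_blocksD[OF that(1)]
    note two = two_blocks_rainbow[OF T_P(1-3) that(2)]
    show "cards_of_rank (T \<union> P \<union> E) a = T" "cards_of_rank (T \<union> P \<union> E) b = P"
      using two(3,4) by simp_all
    show "card (cards_of_rank (T \<union> P \<union> E) z) = 3 \<longleftrightarrow> z = a"
      "card (cards_of_rank (T \<union> P \<union> E) z) = 2 \<longleftrightarrow> z = b"
      using two(3,4) two(5)[of z] T_P by (cases "z = a"; cases "z = b"; simp)+
  qed
  have "a = a'" "b = b'"
    using profile(3,4)[OF x] profile(3,4)[OF y] eq by metis+
  then show ?thesis
    using profile(1,2)[OF x] profile(1,2)[OF y] eq by simp
qed

lemma freq_FH_ge: "r * ((r - 1) * 24) * ((r - 2 choose 2) * 16) \<le> freq r FH"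
proof -
  let ?Es = "\<lambda>(a, b, T :: card set, P :: card set). rainbow_sets ({1..r} - {a, b}) 2"
  let ?hand = "\<lambda>(x, E). (case x of (a, b, T, P) \<Rightarrow> T \<union> P) \<union> E"
  have "r * ((r - 1) * 24) * ((r - 2 choose 2) * 16) \<le> card (Sigma (full_house_blocks r) ?Es)"
  proof (rule card_Sigma_ge)
    show "r * ((r - 1) * 24) \<le> card (full_house_blocks r)"
      unfolding full_house_blocks_def
      by (rule card_Sigma_ge) (auto simp: n_subsets card_cartesian_product)
    show "(r - 2 choose 2) * 16 \<le> card (?Es x)" if "x \<in> full_house_blocks r" for x
    proof -
      obtain a b T P where "x = (a, b, T, P)"
        using prod_cases4 by blast
      then show ?thesis
        using that full_house_blocksD[of a b T P r] card_rainbow_sets_Diff_ge[of "{a, b}" r 2] by auto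
    qed
  qed (auto simp: full_house_blocks_def finite_subset)
  also have "\<dots> \<le> freq r FH"
  proof (rule card_le_freq)
    show "inj_on ?hand (Sigma (full_house_blocks r) ?Es)"
      by (rule inj_on_disjoint_Un; simp only: split_paired_all prod.case)
        (rule full_house_hand(1) full_house_hand_determined; assumption)+
    show "?hand ` Sigma (full_house_blocks r) ?Es \<subseteq> {s \<in> seven_sets r. contains_type r FH s}"
      using full_house_hand(2,3) by auto
  qed
  finally show ?thesis .
qed

lemma card_2_Min_Max:
  fixes R :: "'a::linorder set"
  assumes "card R = 2"
  shows "z \<in> R \<longleftrightarrow> z = Min R \<or> z = Max R" "Min R < Max R"
proof -
  obtain x y where R: "R = {x, y}" "x < y"
    using assms by (auto simp: card_2_iff neq_iff)
  then show "z \<in> R \<longleftrightarrow> z = Min R \<or> z = Max R" "Min R < Max R"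
    by auto
qed

definition two_pair_blocks :: "nat \<Rightarrow> (nat set \<times> card set \<times> card set) set" where
  "two_pair_blocks r = (SIGMA R:{R. R \<subseteq> {1..r} \<and> card R = 2}.
     {T. T \<subseteq> rank_cards (Min R) \<and> card T = 2} \<times> {P. P \<subseteq> rank_cards (Max R) \<and> card P = 2})"

lemma two_pair_blocksD:
  assumes "(R, T, P) \<in> two_pair_blocks r"
  shows "T \<subseteq> rank_cards (Min R)" "P \<subseteq> rank_cards (Max R)" "Min R \<noteq> Max R" "card T = 2" "card P = 2"
    "z \<in> R \<longleftrightarrow> z = Min R \<or> z = Max R" "R \<subseteq> {1..r}" "card R = 2"
  using assms card_2_Min_Max[where R = R] by (auto simp: two_pair_blocks_def)

lemma two_pair_hand:
  assumes blocks: "(R, T, P) \<in> two_pair_blocks r"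
    and rainbow: "E \<in> rainbow_sets ({1..r} - R) 3"
  shows "(T \<union> P) \<inter> E = {}" "T \<union> P \<union> E \<in> seven_sets r" "contains_type r TwoP (T \<union> P \<union> E)"
proof -
  note T_P = two_pair_blocksD[OF blocks]
  have ranks: "Min R \<in> {1..r}" "Max R \<in> {1..r}" "Min R \<notin> {1..r} - R" "Max R \<notin> {1..r} - R"
    using T_P(6)[where z = "Min R"] T_P(6)[where z = "Max R"] T_P(7) by auto
  note two = two_blocks_rainbow[OF T_P(1-3) rainbow ranks(3,4)]
  show "(T \<union> P) \<inter> E = {}"
    using two(2) .
  show "T \<union> P \<union> E \<in> seven_sets r"
    using T_P(1-5) ranks rainbow
    by (intro two_blocks_rainbow_in_seven_sets[of T "Min R" P "Max R" r E "{1..r} - R" 3]) auto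
  have "card E = 3"
    using rainbow by (simp add: rainbow_sets_def)
  then obtain e where e: "e \<in> E"
    by (metis card.empty ex_in_conv zero_neq_numeral)
  let ?h = "insert e (T \<union> P)"
  have "finite T" "finite P"
    using T_P(1,2) by (simp_all add: finite_subset_rank_cards)
  moreover have "e \<notin> T \<union> P"
    using two(2) e by blast
  ultimately have "card ?h = 5"
    using T_P(4,5) two(1) by (simp add: card_Un_disjoint)
  moreover have "has_n_of_rank 2 (Min R) ?h" "has_n_of_rank 2 (Max R) ?h"
    using has_n_of_rankI[of T ?h "Min R"] has_n_of_rankI[of P ?h "Max R"] T_P(1,2,4,5)
      \<open>finite T\<close> \<open>finite P\<close> by auto
  then have "of_type r TwoP ?h"
    unfolding of_type.simps using T_P(3) by blast
  ultimately show "contains_type r TwoP (T \<union> P \<union> E)"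
    using e by (intro contains_typeI[of ?h]) auto
qed

lemma two_pair_hand_determined:
  assumes x: "(R, T, P) \<in> two_pair_blocks r" "E \<in> rainbow_sets ({1..r} - R) 3"
    and y: "(R', T', P') \<in> two_pair_blocks r" "E' \<in> rainbow_sets ({1..r} - R') 3"
    and eq: "T \<union> P \<union> E = T' \<union> P' \<union> E'"
  shows "(R, T, P) = (R', T', P')"
proof -
  have profile: "cards_of_rank (T \<union> P \<union> E) (Min R) = T" "cards_of_rank (T \<union> P \<union> E) (Max R) = P"
      "card (cards_of_rank (T \<union> P \<union> E) z) = 2 \<longleftrightarrow> z \<in> R"
    if "(R, T, P) \<in> two_pair_blocks r" "E \<in> rainbow_sets ({1..r} - R) 3" for R T P E z
  proof -
    note T_P = two_pair_blocksD[OF that(1)]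
    have "Min R \<notin> {1..r} - R" "Max R \<notin> {1..r} - R"
      using T_P(6)[where z = "Min R"] T_P(6)[where z = "Max R"] by auto
    note two = two_blocks_rainbow[OF T_P(1-3) that(2) this]
    show "cards_of_rank (T \<union> P \<union> E) (Min R) = T" "cards_of_rank (T \<union> P \<union> E) (Max R) = P"
      using two(3,4) .
    show "card (cards_of_rank (T \<union> P \<union> E) z) = 2 \<longleftrightarrow> z \<in> R"
      using two(3,4) two(5)[of z] T_P(3-5) T_P(6)[where z = z]
      by (cases "z = Min R"; cases "z = Max R"; auto)
  qed
  have "z \<in> R \<longleftrightarrow> z \<in> R'" for z
    using profile(3)[OF x, of z] profile(3)[OF y, of z] eq by simp
  then have "R = R'"
    by blast
  then show ?thesis
    using profile(1,2)[OF x] profile(1,2)[OF y] eq by simp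
qed

lemma freq_TwoP_ge: "(r choose 2) * 36 * ((r - 2 choose 3) * 64) \<le> freq r TwoP"
proof -
  let ?Es = "\<lambda>(R, T :: card set, P :: card set). rainbow_sets ({1..r} - R) 3"
  let ?hand = "\<lambda>(x, E). (case x of (R, T, P) \<Rightarrow> T \<union> P) \<union> E"
  have "(r choose 2) * 36 * ((r - 2 choose 3) * 64) \<le> card (Sigma (two_pair_blocks r) ?Es)"
  proof (rule card_Sigma_ge)
    show "(r choose 2) * 36 \<le> card (two_pair_blocks r)"
      unfolding two_pair_blocks_def
      by (rule card_Sigma_ge) (auto simp: n_subsets card_cartesian_product)
    show "(r - 2 choose 3) * 64 \<le> card (?Es x)" if "x \<in> two_pair_blocks r" for x
    proof -
      obtain R T P where "x = (R, T, P)"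
        using prod_cases3 by blast
      then show ?thesis
        using that two_pair_blocksD[of R T P r] card_rainbow_sets_Diff_ge[of R r 3] by auto
    qed
  qed (auto simp: two_pair_blocks_def finite_subset)
  also have "\<dots> \<le> freq r TwoP"
  proof (rule card_le_freq)
    show "inj_on ?hand (Sigma (two_pair_blocks r) ?Es)"
      by (rule inj_on_disjoint_Un; simp only: split_paired_all prod.case)
        (rule two_pair_hand(1) two_pair_hand_determined; assumption)+
    show "?hand ` Sigma (two_pair_blocks r) ?Es \<subseteq> {s \<in> seven_sets r. contains_type r TwoP s}"
      using two_pair_hand(2,3) by auto
  qed
  finally show ?thesis .
qed

lemma flush_hand:
  assumes "j < 4" "F \<subseteq> {j} \<times> {1..r}" "card F = 5" "E \<subseteq> ({0..<4} - {j}) \<times> {1..r}" "card E = 2"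
  shows "F \<union> E \<in> seven_sets r" "contains_type r FL (F \<union> E)"
proof -
  show "F \<union> E \<in> seven_sets r"
    using assms by (intro Un_in_seven_setsI) (auto simp: deck_def)
  have "suit c = j" if "c \<in> F" for c
    using subsetD[OF assms(2) that] by (simp add: mem_Times_iff)
  then have "is_flush F"
    by (simp add: is_flush_def)
  then show "contains_type r FL (F \<union> E)"
    using assms(3) by (intro contains_typeI[of F]) auto
qed

lemma flush_hand_suits:
  assumes "F \<subseteq> {j} \<times> {1..r}" "card F = 5" "E \<subseteq> ({0..<4} - {j}) \<times> {1..r}" "card E = 2"
  shows "card {c \<in> F \<union> E. suit c = z} = 5 \<longleftrightarrow> z = j" "{c \<in> F \<union> E. suit c = j} = F"
proof -
  have "card {c \<in> E. suit c = z} \<le> 2"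
    using assms(4) card_mono[of E "{c \<in> E. suit c = z}"] card.infinite[of E] by fastforce
  moreover have "{c \<in> F \<union> E. suit c = z} = (if z = j then F else {c \<in> E. suit c = z})"
    using assms by auto
  ultimately show "card {c \<in> F \<union> E. suit c = z} = 5 \<longleftrightarrow> z = j" "{c \<in> F \<union> E. suit c = j} = F"
    using assms by auto
qed

lemma freq_FL_ge: "4 * (r choose 5) * (3 * r choose 2) \<le> freq r FL"
proof -
  let ?X = "SIGMA j:{0..<4::nat}. {F. F \<subseteq> {j} \<times> {1..r} \<and> card F = 5}"
  let ?off_suit = "\<lambda>j. {E. E \<subseteq> ({0..<4} - {j}) \<times> {1..r} \<and> card E = 2}"
  let ?Es = "\<lambda>(j, F :: card set). ?off_suit j"
  have "4 * (r choose 5) * (3 * r choose 2) \<le> card (Sigma ?X ?Es)"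
  proof (rule card_Sigma_ge)
    show "4 * (r choose 5) \<le> card ?X"
      by (rule card_Sigma_ge) (auto simp: n_subsets card_cartesian_product)
  qed (auto simp: n_subsets card_cartesian_product)
  also have "\<dots> \<le> freq r FL"
  proof (rule card_le_freq)
    show "inj_on (\<lambda>(x, E). snd x \<union> E) (Sigma ?X ?Es)"
    proof (rule inj_on_disjoint_Un; simp only: split_paired_all prod.case snd_conv)
      fix j F E
      assume "(j, F) \<in> ?X" "E \<in> ?off_suit j"
      then show "F \<inter> E = {}"
        by auto
    next
      fix j F E j' F' E'
      assume x: "(j, F) \<in> ?X" "E \<in> ?off_suit j" and y: "(j', F') \<in> ?X" "E' \<in> ?off_suit j'"
        and eq: "F \<union> E = F' \<union> E'"
      then have "j = j'"
        using flush_hand_suits(1)[of F j r E j] flush_hand_suits(1)[of F' j' r E' j] by auto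
      then show "(j, F) = (j', F')"
        using flush_hand_suits(2)[of F j r E] flush_hand_suits(2)[of F' j' r E'] x y eq by auto
    qed
    show "(\<lambda>(x, E). snd x \<union> E) ` Sigma ?X ?Es \<subseteq> {s \<in> seven_sets r. contains_type r FL s}"
      using flush_hand by auto
  qed
  finally show ?thesis .
qed

section \<open>Upper bounds\<close>

lemma card_of_a_kind_le:
  assumes "1 \<le> n"
  shows "card {s \<in> seven_sets r. \<exists>a. n \<le> card (cards_of_rank s a)}
           \<le> r * ((4 choose n) * (4 * r choose (7 - n)))"
proof -
  let ?D = "SIGMA a:{1..r}. {T. T \<subseteq> rank_cards a \<and> card T = n} \<times> {U. U \<subseteq> deck r \<and> card U = 7 - n}"
  have "{s \<in> seven_sets r. \<exists>a. n \<le> card (cards_of_rank s a)} \<subseteq> (\<lambda>(a, T, U). T \<union> U) ` ?D"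
  proof clarify
    fix s a
    assume s: "s \<in> seven_sets r" and "n \<le> card (cards_of_rank s a)"
    then obtain T where T: "T \<subseteq> cards_of_rank s a" "card T = n"
      by (meson obtain_subset_with_card_n)
    obtain c where "c \<in> T"
      using T(2) assms by (metis all_not_in_conv card.empty not_one_le_zero)
    then have "T \<subseteq> rank_cards a" "a \<in> {1..r}"
      using cards_of_rank_in_deck[OF seven_setsD(1)[OF s]] T(1) by blast+
    moreover have "T \<subseteq> s"
      using T(1) by (auto simp: cards_of_rank_def)
    moreover have "s - T \<subseteq> deck r" "card (s - T) = 7 - n"
      using seven_setsD[OF s] \<open>T \<subseteq> s\<close> T(2) by (auto simp: card_Diff_subset finite_subset)
    ultimately show "s \<in> (\<lambda>(a, T, U). T \<union> U) ` ?D"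
      using T(2) by (intro image_eqI[of _ _ "(a, T, s - T)"]) auto
  qed
  then have "card {s \<in> seven_sets r. \<exists>a. n \<le> card (cards_of_rank s a)} \<le> card ((\<lambda>(a, T, U). T \<union> U) ` ?D)"
    by (intro card_mono) auto
  also have "\<dots> \<le> card ?D"
    by (rule card_image_le) auto
  also have "\<dots> = r * ((4 choose n) * (4 * r choose (7 - n)))"
    by (simp add: card_cartesian_product n_subsets card_deck)
  finally show ?thesis .
qed

lemma freq_of_a_kind_le:
  assumes "1 \<le> n" and "\<And>h. of_type r t h \<Longrightarrow> \<exists>a. has_n_of_rank n a h"
  shows "freq r t \<le> r * ((4 choose n) * (4 * r choose (7 - n)))"
proof -
  have "\<exists>a. n \<le> card (cards_of_rank s a)" if s: "s \<in> seven_sets r" "contains_type r t s" for s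
  proof -
    obtain h where "h \<subseteq> s" "of_type r t h"
      using s(2) by (auto simp: contains_type_def)
    then obtain a where "has_n_of_rank n a h"
      using assms(2) by blast
    then show ?thesis
      using has_n_of_rank_mono \<open>h \<subseteq> s\<close> seven_setsD(2)[OF s(1)] by blast
  qed
  then have "freq r t \<le> card {s \<in> seven_sets r. \<exists>a. n \<le> card (cards_of_rank s a)}"
    unfolding freq_def by (intro card_mono) auto
  also have "\<dots> \<le> r * ((4 choose n) * (4 * r choose (7 - n)))"
    using assms(1) by (rule card_of_a_kind_le)
  finally show ?thesis .
qed

section \<open>Straights\<close>

definition covering_subsets :: "nat \<Rightarrow> nat set \<Rightarrow> nat set \<Rightarrow> card set set" where
  "covering_subsets n W Y = {s. s \<subseteq> {0..<4} \<times> Y \<and> card s = n \<and> W \<subseteq> rank ` s}"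

lemma finite_covering_subsets [simp]: "finite Y \<Longrightarrow> finite (covering_subsets n W Y)"
  by (rule finite_subset[of _ "Pow ({0..<4} \<times> Y)"]) (auto simp: covering_subsets_def)

text \<open>Inclusion-exclusion on one prescribed rank: the sets covering it are all sets minus
  those avoiding it.\<close>

fun cover_count :: "nat \<Rightarrow> nat \<Rightarrow> nat \<Rightarrow> real" where
  "cover_count n 0 m = real (4 * m choose n)"
| "cover_count n (Suc k) m = cover_count n k m - cover_count n k (m - 1)"

lemma card_covering_subsets:
  assumes "finite Y" "W \<subseteq> Y"
  shows "real (card (covering_subsets n W Y)) = cover_count n (card W) (card Y)"
proof -
  have "finite W"
    using assms finite_subset by blast
  then show ?thesis
    using assms
  proof (induction W arbitrary: Y rule: finite_induct)
    case empty
    have "covering_subsets n {} Y = {s. s \<subseteq> {0..<4} \<times> Y \<and> card s = n}"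
      by (auto simp: covering_subsets_def)
    then show ?case
      using empty.prems by (simp add: n_subsets card_cartesian_product)
  next
    case (insert w W)
    have "covering_subsets n W Y = covering_subsets n (insert w W) Y \<union> covering_subsets n W (Y - {w})"
      unfolding covering_subsets_def by (auto; force)
    moreover have "covering_subsets n (insert w W) Y \<inter> covering_subsets n W (Y - {w}) = {}"
      by (auto simp: covering_subsets_def)
    ultimately have "card (covering_subsets n W Y)
        = card (covering_subsets n (insert w W) Y) + card (covering_subsets n W (Y - {w}))"
      using insert.prems(1) by (simp add: card_Un_disjoint)
    moreover have "real (card (covering_subsets n W Y)) = cover_count n (card W) (card Y)"
      "real (card (covering_subsets n W (Y - {w}))) = cover_count n (card W) (card Y - 1)"
      using insert.IH[of Y] insert.IH[of "Y - {w}"] insert.prems insert.hyps(2) by auto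
    ultimately show ?case
      using insert.hyps by simp
  qed
qed

lemma cover_count_numeral:
  "cover_count n (numeral k) m = cover_count n (pred_numeral k) m - cover_count n (pred_numeral k) (m - 1)"
  by (simp add: numeral_eq_Suc)

lemma cover_count_7_5:
  assumes "5 \<le> m"
  shows "cover_count 7 5 m = 512 * (16 * real m ^ 2 - 104 * real m + 175)"
proof -
  obtain u where m: "m = u + 5"
    using assms by (metis add.commute le_Suc_ex)
  have "cover_count 7 5 m = cover_count 7 0 (u + 5) - 5 * cover_count 7 0 (u + 4)
      + 10 * cover_count 7 0 (u + 3) - 10 * cover_count 7 0 (u + 2) + 5 * cover_count 7 0 (u + 1)
      - cover_count 7 0 u"
    unfolding m by (simp add: cover_count_numeral add.commute del: cover_count.simps(1))
  also have "\<dots> = 512 * (16 * real m ^ 2 - 104 * real m + 175)"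
    unfolding m by (simp add: real_binomial_expand(5)) algebra
  finally show ?thesis .
qed

text \<open>Window 0 is the ace-low straight; the rank just below window 1 is the ace r.\<close>

definition straight_window :: "nat \<Rightarrow> nat \<Rightarrow> nat set" where
  "straight_window r k = (if k = 0 then {r, 1, 2, 3, 4} else {k..k + 4})"

definition rank_below :: "nat \<Rightarrow> nat \<Rightarrow> nat" where
  "rank_below r k = (if k = 1 then r else k - 1)"

lemma lowest_covered_window:
  fixes S :: "nat set"
  assumes "1 \<le> k" "k + 4 \<le> r" "{k..k + 4} \<subseteq> S"
  shows "straight_window r 0 \<subseteq> S \<or>
    (\<exists>j\<in>{1..r - 4}. straight_window r j \<subseteq> S \<and> rank_below r j \<notin> S)"
proof -
  let ?covered = "\<lambda>k. 1 \<le> k \<and> k + 4 \<le> r \<and> {k..k + 4} \<subseteq> S"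
  define j where "j = (LEAST k. ?covered k)"
  have j: "?covered j"
    unfolding j_def by (rule LeastI[of ?covered k]) (use assms in blast)
  consider "rank_below r j \<notin> S" | "j = 1" "r \<in> S" | "j \<noteq> 1" "j - 1 \<in> S"
    by (cases "j = 1") (auto simp: rank_below_def)
  then show ?thesis
  proof cases
    case 1
    then show ?thesis
      using j by (intro disjI2 bexI[of _ j]) (auto simp: straight_window_def)
  next
    case 2
    have "{r, 1, 2, 3, 4} \<subseteq> insert r {1..1 + 4}"
      by auto
    then show ?thesis
      using j 2 by (auto simp: straight_window_def)
  next
    case 3
    have "{j - 1..j - 1 + 4} \<subseteq> insert (j - 1) {j..j + 4}"
      by auto
    then have "?covered (j - 1)"
      using j 3 by auto
    then have "j \<le> j - 1"
      unfolding j_def by (rule Least_le)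
    then show ?thesis
      using j by (cases j) auto
  qed
qed

lemma contains_straight_window:
  assumes "contains_type r ST s"
  shows "straight_window r 0 \<subseteq> rank ` s \<or>
    (\<exists>k\<in>{1..r - 4}. straight_window r k \<subseteq> rank ` s \<and> rank_below r k \<notin> rank ` s)"
proof -
  obtain h where "h \<subseteq> s" "is_straight r h"
    using assms by (auto simp: contains_type_def)
  then have "rank ` h \<subseteq> rank ` s"
    by (simp add: image_mono)
  then consider "straight_window r 0 \<subseteq> rank ` s"
    | k where "1 \<le> k" "k + 4 \<le> r" "{k..k + 4} \<subseteq> rank ` s"
    using \<open>is_straight r h\<close> unfolding is_straight_def straight_window_def by auto
  then show ?thesis
  proof cases
    case 1
    then show ?thesis ..
  next
    case 2
    then show ?thesis
      by (rule lowest_covered_window)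
  qed
qed

lemma straight_sets_subset_covering:
  "{s \<in> seven_sets r. contains_type r ST s} \<subseteq> covering_subsets 7 (straight_window r 0) {1..r} \<union>
     (\<Union>k\<in>{1..r - 4}. covering_subsets 7 (straight_window r k) ({1..r} - {rank_below r k}))"
proof
  fix s
  assume "s \<in> {s \<in> seven_sets r. contains_type r ST s}"
  then have s: "s \<in> seven_sets r" "contains_type r ST s"
    by simp_all
  have s_ranks: "s \<subseteq> {0..<4} \<times> {1..r}" "card s = 7"
    using seven_setsD[OF s(1)] by (auto simp: deck_def)
  from contains_straight_window[OF s(2)]
  consider "straight_window r 0 \<subseteq> rank ` s"
    | k where "k \<in> {1..r - 4}" "straight_window r k \<subseteq> rank ` s" "rank_below r k \<notin> rank ` s"
    by blast
  then show "s \<in> covering_subsets 7 (straight_window r 0) {1..r} \<union>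
     (\<Union>k\<in>{1..r - 4}. covering_subsets 7 (straight_window r k) ({1..r} - {rank_below r k}))"
  proof cases
    case 1
    then show ?thesis
      using s_ranks by (simp add: covering_subsets_def)
  next
    case (2 k)
    then have "s \<subseteq> {0..<4} \<times> ({1..r} - {rank_below r k})"
      using s_ranks(1) by (auto simp: image_iff)
    then show ?thesis
      using 2 s_ranks(2) by (auto simp: covering_subsets_def)
  qed
qed

lemma card_covering_straight_window:
  assumes "6 \<le> r"
  shows "real (card (covering_subsets 7 (straight_window r 0) {1..r})) = cover_count 7 5 r"
    and "k \<in> {1..r - 4} \<Longrightarrow>
      real (card (covering_subsets 7 (straight_window r k) ({1..r} - {rank_below r k})))
        = cover_count 7 5 (r - 1)"
proof -
  have "card (straight_window r 0) = 5" "straight_window r 0 \<subseteq> {1..r}"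
    using assms by (auto simp: straight_window_def)
  then show "real (card (covering_subsets 7 (straight_window r 0) {1..r})) = cover_count 7 5 r"
    using card_covering_subsets[of "{1..r}" "straight_window r 0" 7] by (simp del: cover_count.simps)
next
  assume k: "k \<in> {1..r - 4}"
  then have "rank_below r k \<in> {1..r}" "straight_window r k \<subseteq> {1..r} - {rank_below r k}"
    using assms by (auto simp: straight_window_def rank_below_def)
  moreover have "card (straight_window r k) = 5"
    using k by (simp add: straight_window_def)
  ultimately show "real (card (covering_subsets 7 (straight_window r k) ({1..r} - {rank_below r k})))
      = cover_count 7 5 (r - 1)"
    using card_covering_subsets[of "{1..r} - {rank_below r k}" "straight_window r k" 7]
    by (simp del: cover_count.simps)
qed

lemma freq_ST_le:
  assumes "6 \<le> r"
  shows "real (freq r ST) \<le> cover_count 7 5 r + real (r - 4) * cover_count 7 5 (r - 1)"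
proof -
  let ?A = "covering_subsets 7 (straight_window r 0) {1..r}"
  let ?B = "\<lambda>k. covering_subsets 7 (straight_window r k) ({1..r} - {rank_below r k})"
  have "freq r ST \<le> card (?A \<union> (\<Union>k\<in>{1..r - 4}. ?B k))"
    unfolding freq_def using straight_sets_subset_covering by (intro card_mono) auto
  also have "\<dots> \<le> card ?A + card (\<Union>k\<in>{1..r - 4}. ?B k)"
    by (rule card_Un_le)
  also have "\<dots> \<le> card ?A + (\<Sum>k\<in>{1..r - 4}. card (?B k))"
    using card_UN_le[of "{1..r - 4}" ?B] by simp
  finally have "real (freq r ST) \<le> real (card ?A + (\<Sum>k\<in>{1..r - 4}. card (?B k)))"
    by (simp only: of_nat_le_iff)
  also have "\<dots> = cover_count 7 5 r + (\<Sum>k\<in>{1..r - 4}. cover_count 7 5 (r - 1))"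
    using card_covering_straight_window[OF assms] by simp
  finally show ?thesis
    by simp
qed

section \<open>Strict inclusions\<close>

lemma contains_HC: "s \<in> seven_sets r \<Longrightarrow> contains_type r HC s"
  using seven_setsD(3)[of s r] obtain_subset_with_card_n[of 5 s]
  by (auto simp: contains_type_def)

definition straight_hand :: "card set" where
  "straight_hand = {(0, 1), (1, 2), (0, 3), (0, 4), (0, 5), (1, 6), (1, 7)}"

definition trips_hand :: "card set" where
  "trips_hand = {(0, 1), (1, 1), (2, 1), (0, 2), (0, 3), (0, 4), (0, 6)}"

definition pair_hand :: "card set" where
  "pair_hand = {(0, 1), (1, 1), (0, 2), (0, 3), (0, 4), (0, 6), (0, 7)}"

lemma witness_hands_in_seven_sets:
  assumes "7 \<le> r"
  shows "straight_hand \<in> seven_sets r" "trips_hand \<in> seven_sets r" "pair_hand \<in> seven_sets r"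
  using assms by (auto simp: seven_sets_def deck_def straight_hand_def trips_hand_def pair_hand_def)

lemma straight_hand_ST: "7 \<le> r \<Longrightarrow> contains_type r ST straight_hand"
  by (rule contains_typeI[of "{(0, 1), (1, 2), (0, 3), (0, 4), (0, 5)}"])
    (auto simp: straight_hand_def is_straight_def)

lemma card_straight_hand_suit: "card {c \<in> straight_hand. suit c = j} \<le> 4"
proof (cases "j = 0")
  case True
  then have "{c \<in> straight_hand. suit c = j} = {(0, 1), (0, 3), (0, 4), (0, 5)}"
    by (auto simp: straight_hand_def)
  then show ?thesis
    by simp
next
  case False
  then have "{c \<in> straight_hand. suit c = j} \<subseteq> {(1, 2), (1, 6), (1, 7)}"
    by (auto simp: straight_hand_def)
  from card_mono[OF _ this] show ?thesis
    by simp
qed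

lemma straight_hand_no_FL: "\<not> contains_type r FL straight_hand"
proof
  assume "contains_type r FL straight_hand"
  then obtain h where h: "h \<subseteq> straight_hand" "card h = 5" "is_flush h"
    by (auto simp: contains_type_def)
  then obtain c where c: "c \<in> h"
    by (metis card.empty ex_in_conv zero_neq_numeral)
  have "h \<subseteq> {d \<in> straight_hand. suit d = suit c}"
    using h(1,3) c unfolding is_flush_def by blast
  then have "card h \<le> card {d \<in> straight_hand. suit d = suit c}"
    by (rule card_mono[rotated]) (simp add: straight_hand_def)
  then show False
    using h(2) card_straight_hand_suit[of "suit c"] by simp
qed

lemma witness_rank_counts:
  assumes "z \<noteq> 1"
  shows "card (cards_of_rank trips_hand z) \<le> 1" "card (cards_of_rank pair_hand z) \<le> 1"
    and "card (cards_of_rank pair_hand 1) = 2"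
proof -
  have "cards_of_rank trips_hand z \<subseteq> {(0, z)}" "cards_of_rank pair_hand z \<subseteq> {(0, z)}"
    using assms by (auto simp: cards_of_rank_def trips_hand_def pair_hand_def)
  then show "card (cards_of_rank trips_hand z) \<le> 1" "card (cards_of_rank pair_hand z) \<le> 1"
    by (metis card.empty card_insert_disjoint card_mono empty_iff finite.intros One_nat_def)+
  have "cards_of_rank pair_hand 1 = {(0, 1), (1, 1)}"
    by (auto simp: cards_of_rank_def pair_hand_def)
  then show "card (cards_of_rank pair_hand 1) = 2"
    by simp
qed

lemma trips_hand_ThreeX: "contains_type r ThreeX trips_hand"
proof -
  let ?h = "{(0, 1), (1, 1), (2, 1), (0, 2), (0, 3)} :: card set"
  have "{c \<in> ?h. rank c = 1} = {(0, 1), (1, 1), (2, 1)}"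
    by auto
  then have "has_n_of_rank 3 1 ?h"
    by (simp add: has_n_of_rank_def)
  moreover have "?h \<subseteq> trips_hand" "card ?h = 5"
    by (auto simp: trips_hand_def)
  ultimately show ?thesis
    by (intro contains_typeI[of ?h]) auto
qed

lemma trips_hand_no_FH: "\<not> contains_type r FH trips_hand"
proof
  assume "contains_type r FH trips_hand"
  then obtain h a b where h: "h \<subseteq> trips_hand" "a \<noteq> b" "has_n_of_rank 3 a h" "has_n_of_rank 2 b h"
    by (auto simp: contains_type_def)
  have "finite trips_hand"
    by (simp add: trips_hand_def)
  then have "3 \<le> card (cards_of_rank trips_hand a)" "2 \<le> card (cards_of_rank trips_hand b)"
    using has_n_of_rank_mono[OF h(3,1)] has_n_of_rank_mono[OF h(4,1)] by simp_all
  then show False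
    using witness_rank_counts(1)[of a] witness_rank_counts(1)[of b] h(2) by (cases "a = 1") auto
qed

lemma pair_hand_OneP: "contains_type r OneP pair_hand"
proof -
  let ?h = "{(0, 1), (1, 1), (0, 2), (0, 3), (0, 4)} :: card set"
  have "{c \<in> ?h. rank c = 1} = {(0, 1), (1, 1)}"
    by auto
  then have "has_n_of_rank 2 1 ?h"
    by (simp add: has_n_of_rank_def)
  moreover have "?h \<subseteq> pair_hand" "card ?h = 5"
    by (auto simp: pair_hand_def)
  ultimately show ?thesis
    by (intro contains_typeI[of ?h]) auto
qed

lemma pair_hand_no_TwoP: "\<not> contains_type r TwoP pair_hand"
proof
  assume "contains_type r TwoP pair_hand"
  then obtain h where h: "h \<subseteq> pair_hand" "of_type r TwoP h"
    by (auto simp: contains_type_def)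
  have "finite pair_hand"
    by (simp add: pair_hand_def)
  then have count: "n \<le> card (cards_of_rank pair_hand a)" if "has_n_of_rank n a h" for n a
    using has_n_of_rank_mono[OF that h(1)] by simp
  from h(2) consider a b where "a \<noteq> b" "has_n_of_rank 2 a h" "has_n_of_rank 2 b h"
    | a where "has_n_of_rank 4 a h"
    by auto
  then show False
  proof cases
    case (1 a b)
    then show False
      using count[of 2 a] count[of 2 b] witness_rank_counts(2)[of a] witness_rank_counts(2)[of b]
      by (cases "a = 1") auto
  next
    case (2 a)
    then show False
      using count[of 4 a] witness_rank_counts(2)[of a] witness_rank_counts(3)
      by (cases "a = 1") auto
  qed
qed

lemma contains_type_implications:
  "contains_type r SF s \<Longrightarrow> contains_type r ST s"
  "contains_type r SF s \<Longrightarrow> contains_type r FL s"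
  "contains_type r FH s \<Longrightarrow> contains_type r ThreeX s"
  "contains_type r TwoP s \<Longrightarrow> contains_type r OneP s"
  by (erule contains_type_mono; auto dest: has_n_of_rank_antimono[where m = 2])+

lemma freq_SF_less_ST: "7 \<le> r \<Longrightarrow> freq r SF < freq r ST"
  using contains_type_implications(1,2) straight_hand_ST straight_hand_no_FL witness_hands_in_seven_sets(1)
  by (intro freq_less_of_subset[where w = straight_hand]) blast+

lemma freq_FH_less_ThreeX: "7 \<le> r \<Longrightarrow> freq r FH < freq r ThreeX"
  using contains_type_implications(3) trips_hand_ThreeX trips_hand_no_FH witness_hands_in_seven_sets(2)
  by (intro freq_less_of_subset[where w = trips_hand]) blast+

lemma freq_TwoP_less_OneP: "7 \<le> r \<Longrightarrow> freq r TwoP < freq r OneP"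
  using contains_type_implications(4) pair_hand_OneP pair_hand_no_TwoP witness_hands_in_seven_sets(3)
  by (intro freq_less_of_subset[where w = pair_hand]) blast+

lemma freq_FL_less_HC: "7 \<le> r \<Longrightarrow> freq r FL < freq r HC"
  using contains_HC straight_hand_no_FL witness_hands_in_seven_sets(1)
  by (intro freq_less_of_subset[where w = straight_hand]) blast+

section \<open>Polynomial comparisons\<close>

text \<open>In each comparison, after substituting x = 761 + t the difference of the two sides is a
  polynomial in t with nonnegative coefficients and a positive constant term, which the
  simplifier normalises and proves nonnegative.\<close>

lemma freq_ST_less_FourX:
  assumes "761 \<le> r"
  shows "freq r ST < freq r FourX"
proof -
  define x where "x = real r"
  have "real (freq r ST) \<le> cover_count 7 5 r + real (r - 4) * cover_count 7 5 (r - 1)"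
    using assms by (intro freq_ST_le) simp
  also have "\<dots> = 512 * (16 * x\<^sup>2 - 104 * x + 175) + (x - 4) * (512 * (16 * (x - 1)\<^sup>2 - 104 * (x - 1) + 175))"
    using assms by (simp add: cover_count_7_5 x_def)
  also have "\<dots> < x * (4 * x - 4) * (4 * x - 5) * (4 * x - 6) / 6" (is "?U < ?L")
  proof -
    obtain t where "x = 761 + t" "0 \<le> t"
      using assms by (intro that[of "x - 761"]) (auto simp: x_def)
    then have "1 + ?U \<le> ?L"
      by (simp add: field_simps power2_eq_square)
    then show ?thesis
      by simp
  qed
  also have "\<dots> = real (r * (4 * r - 4 choose 3))"
    using assms by (simp add: x_def real_binomial_expand field_simps)
  also have "\<dots> \<le> real (freq r FourX)"
    using freq_FourX_ge by (simp only: of_nat_le_iff)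
  finally show ?thesis
    by simp
qed

lemma freq_FourX_less_FH:
  assumes "761 \<le> r"
  shows "freq r FourX < freq r FH"
proof -
  define x where "x = real r"
  have "real (freq r FourX) \<le> real (r * ((4 choose 4) * (4 * r choose (7 - 4))))"
    by (simp only: of_nat_le_iff, rule freq_of_a_kind_le) simp_all
  also have "\<dots> = x * (4 * x * (4 * x - 1) * (4 * x - 2) / 6)"
    by (simp add: x_def real_binomial_expand)
  also have "\<dots> < x * (x - 1) * 24 * ((x - 2) * (x - 3) / 2 * 16)" (is "?U < ?L")
  proof -
    obtain t where "x = 761 + t" "0 \<le> t"
      using assms by (intro that[of "x - 761"]) (auto simp: x_def)
    then have "1 + ?U \<le> ?L"
      by (simp add: field_simps power2_eq_square)
    then show ?thesis
      by simp
  qed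
  also have "\<dots> = real (r * ((r - 1) * 24) * ((r - 2 choose 2) * 16))"
    using assms by (simp add: x_def real_binomial_expand field_simps)
  also have "\<dots> \<le> real (freq r FH)"
    using freq_FH_ge by (simp only: of_nat_le_iff)
  finally show ?thesis
    by simp
qed

lemma freq_ThreeX_less_TwoP:
  assumes "761 \<le> r"
  shows "freq r ThreeX < freq r TwoP"
proof -
  define x where "x = real r"
  have "real (freq r ThreeX) \<le> real (r * ((4 choose 3) * (4 * r choose (7 - 3))))"
    by (simp only: of_nat_le_iff, rule freq_of_a_kind_le) simp_all
  also have "\<dots> = x * (4 * (4 * x * (4 * x - 1) * (4 * x - 2) * (4 * x - 3) / 24))"
    by (simp add: x_def real_binomial_expand)
  also have "\<dots> < x * (x - 1) / 2 * 36 * ((x - 2) * (x - 3) * (x - 4) / 6 * 64)" (is "?U < ?L")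
  proof -
    obtain t where "x = 761 + t" "0 \<le> t"
      using assms by (intro that[of "x - 761"]) (auto simp: x_def)
    then have "1 + ?U \<le> ?L"
      by (simp add: field_simps power2_eq_square)
    then show ?thesis
      by simp
  qed
  also have "\<dots> = real ((r choose 2) * 36 * ((r - 2 choose 3) * 64))"
    using assms by (simp add: x_def real_binomial_expand field_simps)
  also have "\<dots> \<le> real (freq r TwoP)"
    using freq_TwoP_ge by (simp only: of_nat_le_iff)
  finally show ?thesis
    by simp
qed

lemma freq_OneP_less_FL:
  assumes "761 \<le> r"
  shows "freq r OneP < freq r FL"
proof -
  define x where "x = real r"
  have "real (freq r OneP) \<le> real (r * ((4 choose 2) * (4 * r choose (7 - 2))))"
    by (simp only: of_nat_le_iff, rule freq_of_a_kind_le) simp_all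
  also have "\<dots> = x * (6 * (4 * x * (4 * x - 1) * (4 * x - 2) * (4 * x - 3) * (4 * x - 4) / 120))"
    by (simp add: x_def real_binomial_expand)
  also have "\<dots> < 4 * (x * (x - 1) * (x - 2) * (x - 3) * (x - 4) / 120) * (3 * x * (3 * x - 1) / 2)"
    (is "?U < ?L")
  proof -
    obtain t where "x = 761 + t" "0 \<le> t"
      using assms by (intro that[of "x - 761"]) (auto simp: x_def)
    then have "1 + ?U \<le> ?L"
      by (simp add: field_simps power2_eq_square)
    then show ?thesis
      by simp
  qed
  also have "\<dots> = real (4 * (r choose 5) * (3 * r choose 2))"
    by (simp add: x_def real_binomial_expand)
  also have "\<dots> \<le> real (freq r FL)"
    using freq_FL_ge by (simp only: of_nat_le_iff)
  finally show ?thesis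
    by simp
qed

fun frequency_position :: "hand_type \<Rightarrow> nat" where
  "frequency_position SF = 0"
| "frequency_position ST = 1"
| "frequency_position FourX = 2"
| "frequency_position FH = 3"
| "frequency_position ThreeX = 4"
| "frequency_position TwoP = 5"
| "frequency_position OneP = 6"
| "frequency_position FL = 7"
| "frequency_position HC = 8"

lemma freq_less_iff_frequency_position:
  assumes "761 \<le> r"
  shows "freq r h < freq r h' \<longleftrightarrow> frequency_position h < frequency_position h'"
proof -
  have "7 \<le> r"
    using assms by simp
  note chain = freq_SF_less_ST[OF \<open>7 \<le> r\<close>] freq_ST_less_FourX[OF assms]
    freq_FourX_less_FH[OF assms] freq_FH_less_ThreeX[OF \<open>7 \<le> r\<close>] freq_ThreeX_less_TwoP[OF assms]
    freq_TwoP_less_OneP[OF \<open>7 \<le> r\<close>] freq_OneP_less_FL[OF assms] freq_FL_less_HC[OF \<open>7 \<le> r\<close>]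
  show ?thesis
    using chain by (cases h; cases h') auto
qed

theorem fact3:
  fixes r r' :: nat and h h' :: hand_type
  assumes "r \<ge> 761" and "r' \<ge> 761"
  shows "freq r h < freq r h' \<longleftrightarrow> freq r' h < freq r' h'"
  using freq_less_iff_frequency_position[OF assms(1)] freq_less_iff_frequency_position[OF assms(2)]
  by simp

end
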